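(* Let $f(z)=z+\sum_{n=2}^{\infty}a_nz^n$ belong to $\mathcal{S}^*_{ch}$, and let $\gamma_1=\frac12a_2$ and $\gamma_2=\frac12\big(a_3-\frac12a_2^2\big)$ be its first two logarithmic coefficients. Then $$-\frac{1}{\sqrt6}\le |\gamma_2|-|\gamma_1|\le\frac14.$$ Both inequalities are sharp (each bound is attained by some function in $\mathcal{S}^*_{ch}$).
   Context: $\mathbb{D}=\{z\in\mathbb{C}:|z|<1\}$. $\mathcal{A}$ is the class of analytic $f$ on $\mathbb{D}$ with $f(0)=0$, $f'(0)=1$. For analytic $g,h$ on $\mathbb{D}$, $g\prec h$ means there is an analytic $\omega$ on $\mathbb{D}$ with $\omega(0)=0$, $|\omega(z)|<1$, and $g=h\circ\omega$. $\mathcal{S}^*_{ch}$ is the class of $f\in\mathcal{A}$ with $\frac{zf'(z)}{f(z)}\prec z+\cosh z$ on $\mathbb{D}$. Logarithmic coefficients $\gamma_n$ are defined by $\log\frac{f(z)}{z}=2\sum_{n\ge1}\gamma_nz^n$. *)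

theory Defs
  imports "HOL-Analysis.Analysis"
begin

definition unit_disc :: "complex set" where
  "unit_disc = ball 0 1"

definition classA :: "(complex \<Rightarrow> complex) \<Rightarrow> bool" where
  "classA f \<longleftrightarrow> f holomorphic_on unit_disc \<and> f 0 = 0 \<and> deriv f 0 = 1"

definition subord :: "(complex \<Rightarrow> complex) \<Rightarrow> (complex \<Rightarrow> complex) \<Rightarrow> bool" where
  "subord g h \<longleftrightarrow> (\<exists>w. w holomorphic_on unit_disc \<and> w 0 = 0 \<and>
       (\<forall>z\<in>unit_disc. norm (w z) < 1) \<and> (\<forall>z\<in>unit_disc. g z = h (w z)))"

definition starfun :: "(complex \<Rightarrow> complex) \<Rightarrow> complex \<Rightarrow> complex" where
  "starfun f z = (if z = 0 then 1 else z * deriv f z / f z)"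

text \<open>The class S*_ch. The quotient z f'/f must be analytic on the disc, which forces
  f to have no zeros in the punctured disc.\<close>
definition S_ch :: "(complex \<Rightarrow> complex) \<Rightarrow> bool" where
  "S_ch f \<longleftrightarrow> classA f \<and> (\<forall>z\<in>unit_disc - {0}. f z \<noteq> 0) \<and>
      subord (starfun f) (\<lambda>z. z + cosh z)"

definition taylor_coeff :: "(complex \<Rightarrow> complex) \<Rightarrow> nat \<Rightarrow> complex" where
  "taylor_coeff f n = (deriv ^^ n) f 0 / fact n"

definition gamma1 :: "(complex \<Rightarrow> complex) \<Rightarrow> complex" where
  "gamma1 f = taylor_coeff f 2 / 2"

definition gamma2 :: "(complex \<Rightarrow> complex) \<Rightarrow> complex" where
  "gamma2 f = (taylor_coeff f 3 - (taylor_coeff f 2)^2 / 2) / 2"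

end

theory Submission
  imports Defs "HOL-Complex_Analysis.Complex_Analysis"
begin

(* A function f belongs to S*_ch exactly when z f'/f = w + cosh w for a Schwarz function
   w(z) = c1 z + c2 z^2 + ... .  Comparing coefficients in z f' = f (w + cosh w) gives
   gamma1 = c1/2 and gamma2 = (c1^2 + 2 c2)/8, while Schwarz-Pick applied to w(z)/z gives
   |c2| <= 1 - |c1|^2.  For t = |c1| the difference |gamma2| - |gamma1| therefore lies between
   max(0, 3t^2 - 2)/8 - t/2 >= -1/sqrt 6 and (2 - t^2)/8 - t/2 <= 1/4.  The bounds are attained
   for w(z) = z^2 and for w(z) = z (c - z)/(1 - c z) with c = sqrt (2/3), where gamma2 = 0. *)

lemma higher_deriv_ident_mult_at_0:
  fixes g :: "complex \<Rightarrow> complex"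
  assumes "g holomorphic_on S" "open S" "0 \<in> S"
  shows "(deriv ^^ Suc n) (\<lambda>z. z * g z) 0 = of_nat (Suc n) * (deriv ^^ n) g 0"
proof -
  have "(deriv ^^ Suc n) (\<lambda>z. z * g z) 0 =
      (\<Sum>i = 0..Suc n. of_nat (Suc n choose i) * (deriv ^^ i) (\<lambda>z. z) 0 * (deriv ^^ (Suc n - i)) g 0)"
    using assms by (intro higher_deriv_mult) auto
  also have "\<dots> = (\<Sum>i \<in> {1}. of_nat (Suc n choose i) * (deriv ^^ (Suc n - i)) g 0)"
    by (intro sum.mono_neutral_cong_right) auto
  finally show ?thesis by simp
qed

lemma derivs_ident_mult_at_0:
  fixes g :: "complex \<Rightarrow> complex"
  assumes "g holomorphic_on S" "open S" "0 \<in> S"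
  shows "deriv (\<lambda>z. z * g z) 0 = g 0" and "deriv (deriv (\<lambda>z. z * g z)) 0 = 2 * deriv g 0"
  using higher_deriv_ident_mult_at_0[OF assms, of 0] higher_deriv_ident_mult_at_0[OF assms, of 1]
  by (simp_all add: numeral_2_eq_2)

lemma deriv_deriv_compose_entire:
  fixes \<phi> w :: "complex \<Rightarrow> complex"
  assumes hol\<phi>: "\<phi> holomorphic_on UNIV" and holw: "w holomorphic_on S" and S: "open S" "z \<in> S"
  shows "deriv (\<lambda>x. \<phi> (w x)) z = deriv \<phi> (w z) * deriv w z"
    and "deriv (deriv (\<lambda>x. \<phi> (w x))) z =
           deriv (deriv \<phi>) (w z) * (deriv w z)^2 + deriv \<phi> (w z) * deriv (deriv w) z"
proof -
  have chain: "deriv (\<lambda>x. \<psi> (w x)) x = deriv \<psi> (w x) * deriv w x"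
    if "\<psi> holomorphic_on UNIV" "x \<in> S" for \<psi> x
    using that holw S analytic_on_open[of UNIV \<psi>] analytic_on_open[of S w]
    by (intro deriv_compose_analytic) (auto intro: analytic_on_subset)
  show "deriv (\<lambda>x. \<phi> (w x)) z = deriv \<phi> (w z) * deriv w z"
    using chain[OF hol\<phi> S(2)] .
  have hol\<phi>': "deriv \<phi> holomorphic_on UNIV" using hol\<phi> by (intro holomorphic_deriv) auto
  have holw': "deriv w holomorphic_on S" using holw S by (intro holomorphic_deriv)
  have comp: "(\<lambda>x. \<psi> (w x)) holomorphic_on S" if "\<psi> holomorphic_on UNIV" for \<psi>
    using holomorphic_on_compose_gen[OF holw that] by (simp add: o_def)
  have "deriv (deriv (\<lambda>x. \<phi> (w x))) z = deriv (\<lambda>x. deriv \<phi> (w x) * deriv w x) z"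
  proof (rule complex_derivative_transform_within_open[OF _ _ S])
    show "deriv (\<lambda>x. \<phi> (w x)) holomorphic_on S"
      using comp[OF hol\<phi>] S(1) by (rule holomorphic_deriv)
    show "(\<lambda>x. deriv \<phi> (w x) * deriv w x) holomorphic_on S"
      using comp[OF hol\<phi>'] holw' by (rule holomorphic_on_mult)
  qed (use chain[OF hol\<phi>] in auto)
  also have "\<dots> = deriv \<phi> (w z) * deriv (deriv w) z + deriv (\<lambda>x. deriv \<phi> (w x)) z * deriv w z"
    by (rule deriv_mult; rule holomorphic_on_imp_differentiable_at[OF _ S])
       (fact comp[OF hol\<phi>'] holw')+
  also have "\<dots> = deriv (deriv \<phi>) (w z) * (deriv w z)^2 + deriv \<phi> (w z) * deriv (deriv w) z"
    using chain[OF hol\<phi>' S(2)] by (simp add: power2_eq_square)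
  finally show "deriv (deriv (\<lambda>x. \<phi> (w x))) z =
           deriv (deriv \<phi>) (w z) * (deriv w z)^2 + deriv \<phi> (w z) * deriv (deriv w) z" .
qed

lemma taylor_coeffs_from_quotient:
  fixes f P :: "complex \<Rightarrow> complex"
  assumes holf: "f holomorphic_on S" and holP: "P holomorphic_on S" and S: "open S" "0 \<in> S"
    and f0: "f 0 = 0" and f'0: "deriv f 0 = 1"
    and eq: "\<And>z. z \<in> S \<Longrightarrow> z * deriv f z = f z * P z"
  shows "taylor_coeff f 2 = deriv P 0"
    and "taylor_coeff f 3 = (deriv P 0)^2 / 2 + deriv (deriv P) 0 / 4"
proof -
  have holf': "deriv f holomorphic_on S" using holf S by (intro holomorphic_deriv)
  have "of_nat (Suc n) * (deriv ^^ Suc n) f 0 =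
      (\<Sum>i = 0..Suc n. of_nat (Suc n choose i) * (deriv ^^ i) f 0 * (deriv ^^ (Suc n - i)) P 0)" for n
  proof -
    have "of_nat (Suc n) * (deriv ^^ Suc n) f 0 = (deriv ^^ Suc n) (\<lambda>z. z * deriv f z) 0"
      using higher_deriv_ident_mult_at_0[OF holf' S] by (simp add: funpow_swap1)
    also have "\<dots> = (deriv ^^ Suc n) (\<lambda>z. f z * P z) 0"
      using holf holf' holP S eq by (intro higher_deriv_transform_within_open) (auto intro!: holomorphic_intros)
    also have "\<dots> = (\<Sum>i = 0..Suc n. of_nat (Suc n choose i) * (deriv ^^ i) f 0 * (deriv ^^ (Suc n - i)) P 0)"
      using holf holP S by (intro higher_deriv_mult) auto
    finally show ?thesis .
  qed
  from this[of 0] this[of 1] this[of 2]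
  have "P 0 = 1" "(deriv ^^ 2) f 0 = 2 * deriv P 0"
    "2 * (deriv ^^ 3) f 0 = 3 * (deriv ^^ 2) f 0 * deriv P 0 + 3 * deriv (deriv P) 0"
    by (simp_all add: f0 f'0 numeral_2_eq_2 numeral_3_eq_3 algebra_simps)
  then show "taylor_coeff f 2 = deriv P 0"
    and "taylor_coeff f 3 = (deriv P 0)^2 / 2 + deriv (deriv P) 0 / 4"
    by (simp_all add: taylor_coeff_def fact_numeral field_simps power2_eq_square)
qed

lemma exists_with_z_deriv_quotient:
  fixes P :: "complex \<Rightarrow> complex"
  assumes holP: "P holomorphic_on S" and S: "open S" "convex S" "0 \<in> S" and P0: "P 0 = 1"
  obtains f where "f holomorphic_on S" "f 0 = 0" "deriv f 0 = 1" "\<And>z. z \<noteq> 0 \<Longrightarrow> f z \<noteq> 0"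
    "\<And>z. z \<in> S \<Longrightarrow> z * deriv f z = f z * P z"
proof -
  define q where "q = (\<lambda>z. if z = 0 then deriv P 0 else (P z - P 0) / (z - 0))"
  have "q holomorphic_on S" unfolding q_def by (rule pole_lemma_open[OF holP S(1)])
  then obtain g where "\<And>z. z \<in> S \<Longrightarrow> (g has_field_derivative q z) (at z within S)"
    using holomorphic_convex_primitive'[OF S(2,1)] by blast
  then have g': "(g has_field_derivative q z) (at z)" if "z \<in> S" for z
    using that at_within_open[OF that S(1)] by metis
  have Pq: "P z = 1 + z * q z" for z
    by (cases "z = 0") (auto simp: q_def P0)
  define f where "f = (\<lambda>z. z * exp (g z - g 0))"
  have f': "(f has_field_derivative exp (g z - g 0) * P z) (at z)" if "z \<in> S" for z
    unfolding f_def Pq by (rule derivative_eq_intros g' that refl | simp add: algebra_simps)+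
  then have deriv_f: "deriv f z = exp (g z - g 0) * P z" if "z \<in> S" for z
    using that by (simp add: DERIV_imp_deriv)
  show ?thesis
  proof
    show "f holomorphic_on S" using f' S(1) by (auto simp: holomorphic_on_open)
    show "f 0 = 0" "\<And>z. z \<noteq> 0 \<Longrightarrow> f z \<noteq> 0" by (simp_all add: f_def)
    show "deriv f 0 = 1" using deriv_f[OF S(3)] by (simp add: P0)
    show "z * deriv f z = f z * P z" if "z \<in> S" for z
      using deriv_f[OF that] by (simp add: f_def)
  qed
qed

lemma Schwarz_Pick_deriv_at_0:
  fixes g :: "complex \<Rightarrow> complex"
  assumes holg: "g holomorphic_on ball 0 1" and lt: "\<And>z. norm z < 1 \<Longrightarrow> norm (g z) < 1"
  shows "norm (deriv g 0) \<le> 1 - norm (g 0)^2"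
proof -
  define a where "a = g 0"
  have na: "norm a < 1" using lt[of 0] by (simp add: a_def)
  have den_eq: "1 - cnj a * a = of_real (1 - norm a ^ 2)"
    using complex_norm_square[of a] by (simp add: mult.commute)
  have pos: "0 < 1 - norm a ^ 2"
    using na by (simp add: power_less_one_iff)
  then have den: "1 - cnj a * a \<noteq> 0"
    unfolding den_eq by (metis of_real_eq_0_iff less_irrefl)
  define k where "k = Moebius_function 0 a \<circ> g"
  have "k holomorphic_on ball 0 1"
    unfolding k_def using holg lt Moebius_function_holomorphic[OF na]
    by (intro holomorphic_on_compose_gen) auto
  moreover have "k 0 = 0" by (simp add: k_def a_def Moebius_function_eq_zero)
  moreover have "norm (k z) < 1" if "norm z < 1" for z
    unfolding k_def using Moebius_function_norm_lt_1[OF na lt[OF that]] by simp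
  ultimately have k'0: "norm (deriv k 0) \<le> 1" using Schwarz_Lemma(2)[of k 0] by auto
  have "(Moebius_function 0 a has_field_derivative 1 / (1 - cnj a * a)) (at a)"
    unfolding Moebius_function_simple[abs_def]
    using den by (auto intro!: derivative_eq_intros simp: power2_eq_square)
  moreover have "(g has_field_derivative deriv g 0) (at 0)"
    using holg by (intro holomorphic_derivI[of _ "ball 0 1"]) auto
  ultimately have "(k has_field_derivative 1 / (1 - cnj a * a) * deriv g 0) (at 0)"
    unfolding k_def a_def by (rule DERIV_chain)
  then have "deriv k 0 = deriv g 0 / of_real (1 - norm a ^ 2)"
    by (simp add: DERIV_imp_deriv den_eq)
  with k'0 pos have "norm (deriv g 0) / (1 - norm a ^ 2) \<le> 1"
    by (simp add: norm_divide del: of_real_diff of_real_power)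
  with pos show ?thesis
    by (simp add: a_def field_simps)
qed

definition Schwarz_function :: "(complex \<Rightarrow> complex) \<Rightarrow> bool" where
  "Schwarz_function w \<longleftrightarrow> w holomorphic_on ball 0 1 \<and> w 0 = 0 \<and> (\<forall>z\<in>ball 0 1. norm (w z) < 1)"

lemma Schwarz_function_ident_mult:
  assumes holm: "m holomorphic_on ball 0 1" and m: "\<And>z. norm z < 1 \<Longrightarrow> norm (m z) \<le> 1"
  shows "Schwarz_function (\<lambda>z. z * m z)"
proof -
  have "norm (z * m z) < 1" if "norm z < 1" for z
    using mult_left_le[OF m[OF that], of "norm z"] that by (simp add: norm_mult)
  then show ?thesis using holm by (auto simp: Schwarz_function_def intro!: holomorphic_intros)
qed

lemma Schwarz_function_second_deriv_bound:
  assumes "Schwarz_function w"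
  shows "norm (deriv (deriv w) 0) \<le> 2 * (1 - norm (deriv w 0)^2)"
proof -
  have holw: "w holomorphic_on ball 0 1" and w0: "w 0 = 0" and lt: "\<And>z. norm z < 1 \<Longrightarrow> norm (w z) < 1"
    using assms by (auto simp: Schwarz_function_def)
  obtain h where holh: "h holomorphic_on ball 0 1" and wh: "\<And>z. norm z < 1 \<Longrightarrow> w z = z * h z"
    and w'0: "deriv w 0 = h 0"
    using Schwarz3[OF holw w0] by blast
  have "(deriv ^^ 2) w 0 = (deriv ^^ 2) (\<lambda>z. z * h z) 0"
    using holw holh wh by (intro higher_deriv_transform_within_open[of _ "ball 0 1"])
      (auto intro!: holomorphic_intros)
  then have w''0: "deriv (deriv w) 0 = 2 * deriv h 0"
    using higher_deriv_ident_mult_at_0[OF holh, of 1] by (simp add: numeral_2_eq_2)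
  have h_le: "norm (h z) \<le> 1" if "norm z < 1" for z
  proof (cases "z = 0")
    case True
    then show ?thesis using Schwarz_Lemma(2)[OF holw w0 lt that] w'0 by simp
  next
    case False
    then show ?thesis using Schwarz_Lemma(1)[OF holw w0 lt that] wh[OF that]
      by (simp add: norm_mult)
  qed
  have "norm (deriv h 0) \<le> 1 - norm (h 0)^2"
  proof (cases "\<forall>z. norm z < 1 \<longrightarrow> norm (h z) < 1")
    case True
    then show ?thesis using Schwarz_Pick_deriv_at_0[OF holh] by blast
  next
    case False
    then obtain \<xi> where \<xi>: "norm \<xi> < 1" "norm (h \<xi>) = 1"
      using h_le by (meson order_less_le)
    then have "h constant_on ball 0 1"
      using h_le by (intro maximum_modulus_principle[OF holh _ _ _ order_refl, of \<xi>]) auto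
    then obtain c where c: "\<And>z. z \<in> ball 0 1 \<Longrightarrow> h z = c"
      by (auto simp: constant_on_def)
    have "deriv h 0 = deriv (\<lambda>_. c) 0"
      using holh c by (intro complex_derivative_transform_within_open[of _ "ball 0 1"]) auto
    moreover have "norm (h 0) = 1" using c[of 0] c[of \<xi>] \<xi> by simp
    ultimately show ?thesis by simp
  qed
  then show ?thesis by (simp add: w''0 w'0 norm_mult)
qed

lemma S_ch_imp_Schwarz_function:
  assumes "S_ch f"
  obtains w where "Schwarz_function w"
    "\<And>z. z \<in> ball 0 1 \<Longrightarrow> z * deriv f z = f z * (w z + cosh (w z))"
proof -
  from assms obtain w where w: "Schwarz_function w" and f0: "f 0 = 0"
    and nz: "\<And>z. z \<in> ball 0 1 - {0} \<Longrightarrow> f z \<noteq> 0"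
    and quot: "\<And>z. z \<in> ball 0 1 \<Longrightarrow> starfun f z = w z + cosh (w z)"
    unfolding S_ch_def classA_def subord_def Schwarz_function_def unit_disc_def by blast
  have "z * deriv f z = f z * (w z + cosh (w z))" if "z \<in> ball 0 1" for z
  proof (cases "z = 0")
    case False
    then show ?thesis using quot[OF that] nz[of z] that by (simp add: starfun_def field_simps)
  qed (simp add: f0)
  with w show ?thesis using that by blast
qed

lemma S_ch_of_Schwarz_function:
  assumes w: "Schwarz_function w"
  obtains f where "S_ch f" "\<And>z. z \<in> ball 0 1 \<Longrightarrow> z * deriv f z = f z * (w z + cosh (w z))"
proof -
  have holw: "w holomorphic_on ball 0 1" and w0: "w 0 = 0"
    using w by (auto simp: Schwarz_function_def)
  have "(\<lambda>z. w z + cosh (w z)) holomorphic_on ball 0 1"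
    unfolding cosh_def by (intro holomorphic_intros holw)
  then obtain f where f: "f holomorphic_on ball 0 1" "f 0 = 0" "deriv f 0 = 1"
      and nz: "\<And>z. z \<noteq> 0 \<Longrightarrow> f z \<noteq> 0"
      and eq: "\<And>z. z \<in> ball 0 1 \<Longrightarrow> z * deriv f z = f z * (w z + cosh (w z))"
    by (rule exists_with_z_deriv_quotient) (auto simp: w0)
  have "starfun f z = w z + cosh (w z)" if "z \<in> ball 0 1" for z
    using eq[OF that] nz[of z] by (cases "z = 0") (auto simp: starfun_def w0 field_simps)
  then have "S_ch f"
    using f nz w unfolding S_ch_def classA_def subord_def Schwarz_function_def unit_disc_def
    by blast
  with eq show ?thesis using that by blast
qed

lemma log_coeffs_of_Schwarz_representation:
  assumes f: "classA f" and w: "Schwarz_function w"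
    and eq: "\<And>z. z \<in> ball 0 1 \<Longrightarrow> z * deriv f z = f z * (w z + cosh (w z))"
  shows "gamma1 f = deriv w 0 / 2"
    and "gamma2 f = ((deriv w 0)^2 + deriv (deriv w) 0) / 8"
proof -
  define \<phi> :: "complex \<Rightarrow> complex" where "\<phi> = (\<lambda>u. u + cosh u)"
  have \<phi>': "(\<phi> has_field_derivative 1 + sinh u) (at u)" for u
    unfolding \<phi>_def by (auto intro!: derivative_eq_intros)
  have \<phi>'': "((\<lambda>u. 1 + sinh u) has_field_derivative cosh u) (at u)" for u :: complex
    by (auto intro!: derivative_eq_intros)
  have hol\<phi>: "\<phi> holomorphic_on UNIV"
    using \<phi>' by (auto simp: holomorphic_on_open)
  have deriv_\<phi>: "deriv \<phi> = (\<lambda>u. 1 + sinh u)"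
    using \<phi>' by (auto intro: DERIV_imp_deriv)
  have holw: "w holomorphic_on ball 0 1" and w0: "w 0 = 0"
    using w by (auto simp: Schwarz_function_def)
  have holf: "f holomorphic_on ball 0 1" and f0: "f 0 = 0" and f'0: "deriv f 0 = 1"
    using f by (auto simp: classA_def unit_disc_def)
  have "(\<lambda>z. \<phi> (w z)) holomorphic_on ball 0 1"
    using holomorphic_on_compose_gen[OF holw hol\<phi>] by (simp add: o_def)
  moreover have "z * deriv f z = f z * \<phi> (w z)" if "z \<in> ball 0 1" for z
    using eq[OF that] by (simp add: \<phi>_def)
  ultimately have coeffs: "taylor_coeff f 2 = deriv (\<lambda>z. \<phi> (w z)) 0"
      "taylor_coeff f 3 = (deriv (\<lambda>z. \<phi> (w z)) 0)^2 / 2 + deriv (deriv (\<lambda>z. \<phi> (w z))) 0 / 4"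
    using taylor_coeffs_from_quotient[OF holf _ _ _ f0 f'0] by auto
  note chain = deriv_deriv_compose_entire[OF hol\<phi> holw, of 0]
  have a2: "taylor_coeff f 2 = deriv w 0"
    using coeffs(1) chain(1) by (simp add: deriv_\<phi> w0)
  have a3: "taylor_coeff f 3 = (deriv w 0)^2 / 2 + ((deriv w 0)^2 + deriv (deriv w) 0) / 4"
    using coeffs(2) chain \<phi>''[THEN DERIV_imp_deriv] by (simp add: deriv_\<phi> w0 algebra_simps)
  show "gamma1 f = deriv w 0 / 2" by (simp add: gamma1_def a2)
  show "gamma2 f = ((deriv w 0)^2 + deriv (deriv w) 0) / 8"
    by (simp add: gamma2_def a2 a3 field_simps)
qed

lemma S_ch_log_coeffs:
  assumes f: "S_ch f"
  obtains w where "Schwarz_function w" "gamma1 f = deriv w 0 / 2"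
    "gamma2 f = ((deriv w 0)^2 + deriv (deriv w) 0) / 8"
proof -
  obtain w where "Schwarz_function w"
    and "\<And>z. z \<in> ball 0 1 \<Longrightarrow> z * deriv f z = f z * (w z + cosh (w z))"
    using S_ch_imp_Schwarz_function[OF f] by blast
  moreover have "classA f" using f by (simp add: S_ch_def)
  ultimately show ?thesis using that log_coeffs_of_Schwarz_representation by blast
qed

lemma exists_S_ch_with_log_coeffs:
  assumes w: "Schwarz_function w"
  shows "\<exists>f. S_ch f \<and> gamma1 f = deriv w 0 / 2 \<and> gamma2 f = ((deriv w 0)^2 + deriv (deriv w) 0) / 8"
proof -
  obtain f where f: "S_ch f"
    and eq: "\<And>z. z \<in> ball 0 1 \<Longrightarrow> z * deriv f z = f z * (w z + cosh (w z))"
    using S_ch_of_Schwarz_function[OF w] by blast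
  then have "classA f" by (simp add: S_ch_def)
  with f show ?thesis using log_coeffs_of_Schwarz_representation[OF _ w eq] by blast
qed

lemma log_coeff_difference_bounds:
  fixes a W :: complex
  assumes W: "norm W \<le> 2 * (1 - norm a ^ 2)"
  shows "- 1 / sqrt 6 \<le> norm ((a^2 + W) / 8) - norm (a / 2)"
    and "norm ((a^2 + W) / 8) - norm (a / 2) \<le> 1 / 4"
proof -
  define t where "t = norm a"
  define s where "s = norm (a^2 + W)"
  have diff: "norm ((a^2 + W) / 8) - norm (a / 2) = s / 8 - t / 2"
    by (simp add: s_def t_def norm_divide)
  have t: "0 \<le> t" and s: "0 \<le> s" by (simp_all add: t_def s_def)
  have W': "norm W \<le> 2 - 2 * t^2" using W by (simp add: t_def)
  have s_upper: "s \<le> t^2 + norm W"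
    unfolding s_def t_def by (metis norm_power norm_triangle_ineq)
  have s_lower: "t^2 - norm W \<le> s"
    unfolding s_def t_def by (metis norm_diff_ineq norm_power)
  show "norm ((a^2 + W) / 8) - norm (a / 2) \<le> 1 / 4"
    unfolding diff using s_upper W' t zero_le_power2[of t] by linarith
  define u where "u = 2 / sqrt 6"
  have u2: "u^2 = 2 / 3" by (simp add: u_def power_divide)
  have u: "2 / 3 < u"
  proof (rule power_less_imp_less_base)
    show "(2 / 3)^2 < u^2" unfolding u2 by (simp add: power2_eq_square)
  qed (simp add: u_def)
  have "4 * (t - u) \<le> s"
  proof (cases "t \<le> u")
    case True
    then show ?thesis using s by simp
  next
    case False
    \<comment> \<open>since \<open>3 u\<^sup>2 = 2\<close>: \<open>3 t\<^sup>2 - 2 - 4 (t - u) = (t - u) (3 t + 3 u - 4)\<close>\<close>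
    have "0 \<le> (t - u) * (3 * t + 3 * u - 4)"
      using False u by (intro mult_nonneg_nonneg) auto
    moreover have "3 * t^2 - 2 \<le> s" using s_lower W' by linarith
    ultimately show ?thesis using u2 by (simp add: algebra_simps power2_eq_square)
  qed
  then show "- 1 / sqrt 6 \<le> norm ((a^2 + W) / 8) - norm (a / 2)"
    unfolding diff by (simp add: u_def)
qed

lemma S_ch_attains_upper_bound: "\<exists>f. S_ch f \<and> norm (gamma2 f) - norm (gamma1 f) = 1 / 4"
proof -
  have w: "Schwarz_function (\<lambda>z. z * z)"
    by (rule Schwarz_function_ident_mult) (auto intro: holomorphic_intros)
  note derivs = derivs_ident_mult_at_0[of "\<lambda>z. z" UNIV]
  obtain f where f: "S_ch f" and \<gamma>: "gamma1 f = 0" "gamma2 f = 1 / 4"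
    using exists_S_ch_with_log_coeffs[OF w] by (auto simp: derivs)
  show ?thesis using f by (intro exI[of _ f]) (simp add: \<gamma> norm_divide)
qed

lemma S_ch_attains_lower_bound: "\<exists>f. S_ch f \<and> norm (gamma2 f) - norm (gamma1 f) = - 1 / sqrt 6"
proof -
  define c :: real where "c = 2 / sqrt 6"
  have c2: "c^2 = 2 / 3" by (simp add: c_def power_divide)
  have c: "0 < c" "c < 1"
  proof -
    show "0 < c" by (simp add: c_def)
    show "c < 1" by (rule power_less_imp_less_base[of _ 2]) (simp_all add: c2)
  qed
  have nc: "norm (of_real c :: complex) < 1" using c by simp
  define m where "m = (\<lambda>z. - Moebius_function 0 (of_real c) z)"
  have holm: "m holomorphic_on ball 0 1"
    unfolding m_def by (intro holomorphic_intros Moebius_function_holomorphic nc)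
  have "norm (m z) \<le> 1" if "norm z < 1" for z
    using Moebius_function_norm_lt_1[OF nc that, of 0] by (simp add: m_def)
  then have w: "Schwarz_function (\<lambda>z. z * m z)" by (rule Schwarz_function_ident_mult[OF holm])
  have "(m has_field_derivative of_real c ^ 2 - 1) (at 0)"
    unfolding m_def Moebius_function_simple[abs_def]
    by (auto intro!: derivative_eq_intros simp: power2_eq_square)
  then have m'0: "deriv m 0 = of_real c ^ 2 - 1" by (rule DERIV_imp_deriv)
  have m0: "m 0 = of_real c" by (simp add: m_def Moebius_function_simple)
  have derivs: "deriv (\<lambda>z. z * m z) 0 = m 0" "deriv (deriv (\<lambda>z. z * m z)) 0 = 2 * deriv m 0"
    using derivs_ident_mult_at_0[OF holm] by auto
  have "(of_real c)^2 + 2 * (of_real c ^ 2 - 1) = (0 :: complex)"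
    by (simp flip: of_real_power add: c2)
  then obtain f where "S_ch f" "gamma1 f = of_real c / 2" "gamma2 f = 0"
    using exists_S_ch_with_log_coeffs[OF w] by (auto simp: derivs m0 m'0)
  then show ?thesis by (auto simp: c_def norm_divide)
qed

theorem theorem4p1:
  shows "(\<forall>f. S_ch f \<longrightarrow>
            - 1 / sqrt 6 \<le> norm (gamma2 f) - norm (gamma1 f) \<and>
            norm (gamma2 f) - norm (gamma1 f) \<le> 1 / 4)
       \<and> (\<exists>f. S_ch f \<and> norm (gamma2 f) - norm (gamma1 f) = 1 / 4)
       \<and> (\<exists>f. S_ch f \<and> norm (gamma2 f) - norm (gamma1 f) = - 1 / sqrt 6)"
proof (intro conjI allI impI S_ch_attains_upper_bound S_ch_attains_lower_bound)
  fix f assume "S_ch f"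
  then obtain w where w: "Schwarz_function w" and \<gamma>: "gamma1 f = deriv w 0 / 2"
    "gamma2 f = ((deriv w 0)^2 + deriv (deriv w) 0) / 8"
    by (rule S_ch_log_coeffs)
  note bounds = log_coeff_difference_bounds[OF Schwarz_function_second_deriv_bound[OF w]]
  show "- 1 / sqrt 6 \<le> norm (gamma2 f) - norm (gamma1 f)"
    using bounds(1) by (simp add: \<gamma>)
  show "norm (gamma2 f) - norm (gamma1 f) \<le> 1 / 4"
    using bounds(2) by (simp add: \<gamma>)
qed

end
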